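(* Let $G=(V,E)$ be a planar graph with a fixed planar embedding, let $c,\delta,\varepsilon\in(0,1)$, let $k\ge1$ be an integer, and let $\ell$ be an integer with $\ell\ge 2k\delta^{-1}+2\varepsilon^{-1}-1$. Then for any $c$-maximum independent sets $S_1,\dots,S_k$ of $G$ there exists $p\in\{0,1,\dots,\ell\}$ such that simultaneously (i) $|S_h\cap L^p|\le(\delta/2)|S_h|$ for all $h\in[k]$, and (ii) $\sum_{i\ne j}|(S_i\cap L^p)\Delta(S_j\cap L^p)|\le(\varepsilon/2)\sum_{i\ne j}|S_i\Delta S_j|$.
   Context: Levels of vertices of an embedded planar graph: a vertex is at level 1 if it lies on the exterior face; inductively, vertices on the exterior face of the graph obtained after deleting all vertices of levels $1,\dots,i-1$ are at level $i$. For an integer $\ell\ge 0$ and $p\in\{0,\dots,\ell\}$, the $p$-th stratum $L^p$ is the set of vertices whose level is congruent to $p$ modulo $\ell+1$. A $c$-maximum independent set is an independent set $S$ with $|S|\ge c$ times the maximum size of an independent set of $G$. *)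

theory Defs
  imports Complex_Main
begin

definition simple_graph :: "'a set \<Rightarrow> ('a \<Rightarrow> 'a \<Rightarrow> bool) \<Rightarrow> bool" where
  "simple_graph V E \<longleftrightarrow> finite V \<and> (\<forall>u v. E u v \<longrightarrow> u \<in> V \<and> v \<in> V)
     \<and> (\<forall>u v. E u v \<longrightarrow> E v u) \<and> (\<forall>v. \<not> E v v)"

definition independent_set :: "'a set \<Rightarrow> ('a \<Rightarrow> 'a \<Rightarrow> bool) \<Rightarrow> 'a set \<Rightarrow> bool" where
  "independent_set V E S \<longleftrightarrow> S \<subseteq> V \<and> (\<forall>u\<in>S. \<forall>v\<in>S. \<not> E u v)"

definition indep_number :: "'a set \<Rightarrow> ('a \<Rightarrow> 'a \<Rightarrow> bool) \<Rightarrow> nat" where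
  "indep_number V E = Max (card ` {S. independent_set V E S})"

definition c_max_independent_set :: "real \<Rightarrow> 'a set \<Rightarrow> ('a \<Rightarrow> 'a \<Rightarrow> bool) \<Rightarrow> 'a set \<Rightarrow> bool" where
  "c_max_independent_set c V E S \<longleftrightarrow>
     independent_set V E S \<and> real (card S) \<ge> c * real (indep_number V E)"

definition stratum :: "'a set \<Rightarrow> ('a \<Rightarrow> nat) \<Rightarrow> nat \<Rightarrow> nat \<Rightarrow> 'a set" where
  "stratum V lvl l p = {v \<in> V. lvl v mod (l + 1) = p}"

definition symdiff :: "'a set \<Rightarrow> 'a set \<Rightarrow> 'a set" where
  "symdiff A B = (A - B) \<union> (B - A)"

end

theory Submission
  imports Defs
begin

text \<open>The strata L^0, ..., L^l partition V, so every cardinality involved splits as a sum over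
  the l + 1 strata. By a Markov-type count, for each of the k + 1 quantities of interest fewer
  than 2/\<delta> (respectively 2/\<epsilon>) strata carry more than a \<delta>/2 (respectively \<epsilon>/2) share of it.
  Since 2k/\<delta> + 2/\<epsilon> \<le> l + 1, some stratum is exceptional for none of them.\<close>

lemma card_above_fraction_of_sum_less:
  fixes f :: "'p \<Rightarrow> real"
  assumes "finite P" and nonneg: "\<And>p. p \<in> P \<Longrightarrow> f p \<ge> 0"
    and sum_le: "sum f P \<le> T" and "a > 0"
  shows "real (card {p \<in> P. f p > a * T}) < 1 / a"
proof (cases "{p \<in> P. f p > a * T} = {}")
  case True
  then show ?thesis using \<open>a > 0\<close> by (simp only: card.empty of_nat_0) simp
next
  case False
  let ?B = "{p \<in> P. f p > a * T}"
  have "real (card ?B) * (a * T) = (\<Sum>p\<in>?B. a * T)" by simp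
  also have "\<dots> < sum f ?B"
    by (rule sum_strict_mono_ex1) (use \<open>finite P\<close> False in auto)
  also have "\<dots> \<le> sum f P"
    by (rule sum_mono2) (use \<open>finite P\<close> nonneg in auto)
  finally have "real (card ?B) * a * T < 1 * T" using sum_le by simp
  moreover have "T \<ge> 0" using sum_le sum_nonneg[of P f] nonneg by fastforce
  ultimately have "T > 0" by (cases "T = 0") auto
  with \<open>real (card ?B) * a * T < 1 * T\<close> have "real (card ?B) * a < 1"
    by (simp only: mult_less_cancel_right_pos)
  then show ?thesis using \<open>a > 0\<close> by (simp add: field_simps)
qed

lemma exists_simultaneously_below_fraction_of_sum:
  fixes f :: "'i \<Rightarrow> 'p \<Rightarrow> real"
  assumes "finite P" "finite J" "J \<noteq> {}"
    and nonneg: "\<And>j p. j \<in> J \<Longrightarrow> p \<in> P \<Longrightarrow> f j p \<ge> 0"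
    and sum_le: "\<And>j. j \<in> J \<Longrightarrow> sum (f j) P \<le> T j"
    and pos: "\<And>j. j \<in> J \<Longrightarrow> a j > 0"
    and budget: "(\<Sum>j\<in>J. 1 / a j) \<le> real (card P)"
  shows "\<exists>p\<in>P. \<forall>j\<in>J. f j p \<le> a j * T j"
proof -
  define Bad where "Bad j = {p \<in> P. f j p > a j * T j}" for j
  have "real (card (\<Union>j\<in>J. Bad j)) \<le> (\<Sum>j\<in>J. real (card (Bad j)))"
    using card_UN_le[OF \<open>finite J\<close>, of Bad] by (simp flip: of_nat_sum)
  also have "\<dots> < (\<Sum>j\<in>J. 1 / a j)"
  proof (rule sum_strict_mono[OF \<open>finite J\<close> \<open>J \<noteq> {}\<close>])
    fix j assume "j \<in> J"
    then show "real (card (Bad j)) < 1 / a j"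
      unfolding Bad_def
      by (intro card_above_fraction_of_sum_less[OF \<open>finite P\<close>]) (simp_all add: nonneg sum_le pos)
  qed
  finally have "card (\<Union>j\<in>J. Bad j) < card P" using budget by linarith
  moreover have "(\<Union>j\<in>J. Bad j) \<subseteq> P" unfolding Bad_def by blast
  ultimately have "\<not> P \<subseteq> (\<Union>j\<in>J. Bad j)" by (metis less_irrefl subset_antisym)
  then obtain p where "p \<in> P" "\<forall>j\<in>J. p \<notin> Bad j" by blast
  then show ?thesis unfolding Bad_def by (auto simp: not_less)
qed

lemma sum_card_Int_stratum:
  assumes "finite A" "A \<subseteq> V"
  shows "(\<Sum>p\<in>{0..l}. card (A \<inter> stratum V lvl l p)) = card A"
proof -
  have "A = (\<Union>p\<in>{0..l}. A \<inter> stratum V lvl l p)"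
    using assms(2) by (auto simp: stratum_def less_Suc_eq_le)
  moreover have "card (\<Union>p\<in>{0..l}. A \<inter> stratum V lvl l p)
      = (\<Sum>p\<in>{0..l}. card (A \<inter> stratum V lvl l p))"
    by (rule card_UN_disjoint) (use assms in \<open>auto simp: stratum_def\<close>)
  ultimately show ?thesis by simp
qed

lemma sum_sum_card_Int_stratum:
  assumes "finite V" "finite I" "\<And>x. x \<in> I \<Longrightarrow> A x \<subseteq> V"
  shows "(\<Sum>p\<in>{0..l}. \<Sum>x\<in>I. card (A x \<inter> stratum V lvl l p)) = (\<Sum>x\<in>I. card (A x))"
proof -
  have "(\<Sum>p\<in>{0..l}. \<Sum>x\<in>I. card (A x \<inter> stratum V lvl l p))
      = (\<Sum>x\<in>I. \<Sum>p\<in>{0..l}. card (A x \<inter> stratum V lvl l p))"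
    by (rule sum.swap)
  also have "\<dots> = (\<Sum>x\<in>I. card (A x))"
  proof (rule sum.cong[OF refl])
    fix x assume "x \<in> I"
    with assms(1,3) show "(\<Sum>p\<in>{0..l}. card (A x \<inter> stratum V lvl l p)) = card (A x)"
      by (intro sum_card_Int_stratum) (auto intro: finite_subset)
  qed
  finally show ?thesis .
qed

lemma symdiff_Int: "symdiff (A \<inter> L) (B \<inter> L) = symdiff A B \<inter> L"
  unfolding symdiff_def by blast

theorem mainTheorem4:
  fixes V :: "'a set" and E :: "'a \<Rightarrow> 'a \<Rightarrow> bool" and lvl :: "'a \<Rightarrow> nat"
    and c \<delta> \<epsilon> :: real and k l :: nat and S :: "nat \<Rightarrow> 'a set"
  assumes "simple_graph V E"
    and "\<forall>v\<in>V. lvl v \<ge> 1"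
    and "0 < c" "c < 1" "0 < \<delta>" "\<delta> < 1" "0 < \<epsilon>" "\<epsilon> < 1"
    and "k \<ge> 1"
    and "real l \<ge> 2 * real k / \<delta> + 2 / \<epsilon> - 1"
    and "\<forall>h\<in>{1..k}. c_max_independent_set c V E (S h)"
  shows "\<exists>p\<in>{0..l}.
     (\<forall>h\<in>{1..k}. real (card (S h \<inter> stratum V lvl l p)) \<le> (\<delta> / 2) * real (card (S h)))
   \<and> real (\<Sum>(i,j)\<in>{(i,j). i \<in> {1..k} \<and> j \<in> {1..k} \<and> i \<noteq> j}.
           card (symdiff (S i \<inter> stratum V lvl l p) (S j \<inter> stratum V lvl l p)))
     \<le> (\<epsilon> / 2) * real (\<Sum>(i,j)\<in>{(i,j). i \<in> {1..k} \<and> j \<in> {1..k} \<and> i \<noteq> j}.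
           card (symdiff (S i) (S j)))"
proof -
  let ?L = "stratum V lvl l"
  let ?I = "{(i,j). i \<in> {1..k} \<and> j \<in> {1..k} \<and> i \<noteq> j}"
  have "finite V" using assms(1) by (simp add: simple_graph_def)
  have S_sub: "S h \<subseteq> V" if "h \<in> {1..k}" for h
    using assms(11) that by (simp add: c_max_independent_set_def independent_set_def)
  have "finite ?I" by (rule finite_subset[of _ "{1..k} \<times> {1..k}"]) auto
  \<comment> \<open>Index 0 stands for the symmetric-difference sum, index h \<ge> 1 for S h.\<close>
  define f where "f j p = (if j = 0
      then real (\<Sum>(i,j)\<in>?I. card (symdiff (S i) (S j) \<inter> ?L p))
      else real (card (S j \<inter> ?L p)))" for j p
  define T where "T j = (if j = 0 then real (\<Sum>(i,j)\<in>?I. card (symdiff (S i) (S j)))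
      else real (card (S j)))" for j
  define a where "a j = (if j = 0 then \<epsilon> / 2 else \<delta> / 2)" for j :: nat
  have sum_le: "sum (f j) {0..l} \<le> T j" if "j \<in> {0..k}" for j
  proof (cases "j = 0")
    case True
    have "symdiff (S i) (S i') \<subseteq> V" if "(i, i') \<in> ?I" for i i'
      using that S_sub unfolding symdiff_def by auto
    then show ?thesis
      using True sum_sum_card_Int_stratum[OF \<open>finite V\<close> \<open>finite ?I\<close>,
          where A = "\<lambda>(i,j). symdiff (S i) (S j)" and l = l and lvl = lvl]
      by (auto simp: f_def T_def split_def simp flip: of_nat_sum)
  next
    case False
    with that have "S j \<subseteq> V" using S_sub by auto
    moreover from this have "finite (S j)" using \<open>finite V\<close> finite_subset by blast
    ultimately show ?thesis
      using False sum_card_Int_stratum[where A = "S j" and V = V and l = l and lvl = lvl]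
      by (simp add: f_def T_def flip: of_nat_sum)
  qed
  have budget: "(\<Sum>j\<in>{0..k}. 1 / a j) \<le> real (card {0..l})"
    using assms(10) by (simp add: sum.atLeast_Suc_atMost a_def mult.commute)
  have "\<exists>p\<in>{0..l}. \<forall>j\<in>{0..k}. f j p \<le> a j * T j"
    by (rule exists_simultaneously_below_fraction_of_sum[OF _ _ _ _ sum_le _ budget])
      (use assms(5,7) in \<open>auto simp: f_def a_def simp del: of_nat_sum\<close>)
  then obtain p where "p \<in> {0..l}" and below: "\<forall>j\<in>{0..k}. f j p \<le> a j * T j"
    by blast
  from below have "f 0 p \<le> a 0 * T 0" "\<forall>h\<in>{1..k}. f h p \<le> a h * T h" by auto
  with \<open>p \<in> {0..l}\<close> show ?thesis
    by (intro bexI[of _ p]) (auto simp: f_def T_def a_def symdiff_Int)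
qed

end
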